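(* Let $(X,\ll)$ be a past-regular and future-regular chronological set, and let $\eta=\{x_n\}_n$ be a future-directed chain in $X$. Then for every $x\in X$: (a) $x\in \hat L(\eta)$ if and only if $I^-(x)=I^-(\eta)$; (b) $x\in \check L(\eta)$ if and only if $I^+(x)\subset \uparrow\eta$ and $I^+(x)$ is maximal (with respect to inclusion) among the IFs contained in $\uparrow\eta$. Dually, if $\eta$ is a past-directed chain, then $x\in \check L(\eta)$ iff $I^+(x)=I^+(\eta)$, and $x\in\hat L(\eta)$ iff $I^-(x)\subset\downarrow\eta$ and $I^-(x)$ is maximal among the IPs contained in $\downarrow\eta$.
   Context: A chronological set $(X,\ll)$ is a set $X$ with a transitive, anti-reflexive binary relation $\ll$ such that (i) every $x$ satisfies $x\ll y$ or $y\ll x$ for some $y\in X$, and (ii) there is a countable $\mathcal S\subset X$ with: for all $x\ll y$ there is $s\in\mathcal S$ with $x\ll s\ll y$. For $S\subset X$, $I^-(S)=\{y: y\ll x \text{ for some } x\in S\}$, $I^+(S)=\{y: x\ll y \text{ for some } x\in S\}$. A past set is $P\subset X$ with $P=I^-(P)$; an IP (indecomposable past set) is a nonempty past set that cannot be written as the union of two past sets both different from it; future sets and IFs are defined dually. $X$ is past-regular (resp. future-regular) if $I^-(x)$ is an IP (resp. $I^+(x)$ is an IF) for every $x\in X$. A future-directed (resp. past-directed) chain is a sequence $\{x_n\}_n$ with $x_n\ll x_{n+1}$ (resp. $x_{n+1}\ll x_n$) for all $n$; $I^\pm(\eta)$ means $I^\pm$ of the set of its terms. The common future of $S\subset X$ is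 $\uparrow S=I^+(\{y\in X: x\ll y\ \forall x\in S\})$ and the common past is $\downarrow S=I^-(\{y\in X: y\ll x\ \forall x\in S\})$. For a sequence of subsets $A_n$, $LI(\{A_n\})$ is the set of points belonging to $A_n$ for all sufficiently large $n$ and $LS(\{A_n\})$ the set of points belonging to infinitely many $A_n$. For a sequence $\sigma=\{x_n\}_n$ in $X$: $x\in\hat L(\sigma)$ iff $I^-(x)\subset LI(\{I^-(x_n)\})$ and $I^-(x)$ is a maximal IP (w.r.t. inclusion) among IPs contained in $LS(\{I^-(x_n)\})$; dually $x\in\check L(\sigma)$ iff $I^+(x)\subset LI(\{I^+(x_n)\})$ and $I^+(x)$ is a maximal IF among IFs contained in $LS(\{I^+(x_n)\})$. *)

theory Defs
  imports "HOL-Library.Countable_Set"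
begin

text \<open>A chronological set: the carrier is the whole type 'a, the relation is rel.\<close>

definition chronological :: "('a \<Rightarrow> 'a \<Rightarrow> bool) \<Rightarrow> bool" where
  "chronological rel \<longleftrightarrow>
     (\<forall>x y z. rel x y \<longrightarrow> rel y z \<longrightarrow> rel x z) \<and>
     (\<forall>x. \<not> rel x x) \<and>
     (\<forall>x. \<exists>y. rel x y \<or> rel y x) \<and>
     (\<exists>S. countable S \<and> (\<forall>x y. rel x y \<longrightarrow> (\<exists>s\<in>S. rel x s \<and> rel s y)))"

definition chr_past :: "('a \<Rightarrow> 'a \<Rightarrow> bool) \<Rightarrow> 'a set \<Rightarrow> 'a set" where
  "chr_past rel S = {y. \<exists>x\<in>S. rel y x}"

definition chr_fut :: "('a \<Rightarrow> 'a \<Rightarrow> bool) \<Rightarrow> 'a set \<Rightarrow> 'a set" where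
  "chr_fut rel S = {y. \<exists>x\<in>S. rel x y}"

definition past_set :: "('a \<Rightarrow> 'a \<Rightarrow> bool) \<Rightarrow> 'a set \<Rightarrow> bool" where
  "past_set rel P \<longleftrightarrow> P = chr_past rel P"

definition future_set :: "('a \<Rightarrow> 'a \<Rightarrow> bool) \<Rightarrow> 'a set \<Rightarrow> bool" where
  "future_set rel F \<longleftrightarrow> F = chr_fut rel F"

definition is_IP :: "('a \<Rightarrow> 'a \<Rightarrow> bool) \<Rightarrow> 'a set \<Rightarrow> bool" where
  "is_IP rel P \<longleftrightarrow> P \<noteq> {} \<and> past_set rel P \<and>
     \<not> (\<exists>A B. past_set rel A \<and> past_set rel B \<and> A \<noteq> P \<and> B \<noteq> P \<and> P = A \<union> B)"

definition is_IF :: "('a \<Rightarrow> 'a \<Rightarrow> bool) \<Rightarrow> 'a set \<Rightarrow> bool" where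
  "is_IF rel F \<longleftrightarrow> F \<noteq> {} \<and> future_set rel F \<and>
     \<not> (\<exists>A B. future_set rel A \<and> future_set rel B \<and> A \<noteq> F \<and> B \<noteq> F \<and> F = A \<union> B)"

definition past_regular :: "('a \<Rightarrow> 'a \<Rightarrow> bool) \<Rightarrow> bool" where
  "past_regular rel \<longleftrightarrow> (\<forall>x. is_IP rel (chr_past rel {x}))"

definition future_regular :: "('a \<Rightarrow> 'a \<Rightarrow> bool) \<Rightarrow> bool" where
  "future_regular rel \<longleftrightarrow> (\<forall>x. is_IF rel (chr_fut rel {x}))"

definition fut_chain :: "('a \<Rightarrow> 'a \<Rightarrow> bool) \<Rightarrow> (nat \<Rightarrow> 'a) \<Rightarrow> bool" where
  "fut_chain rel x \<longleftrightarrow> (\<forall>n. rel (x n) (x (Suc n)))"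

definition past_chain :: "('a \<Rightarrow> 'a \<Rightarrow> bool) \<Rightarrow> (nat \<Rightarrow> 'a) \<Rightarrow> bool" where
  "past_chain rel x \<longleftrightarrow> (\<forall>n. rel (x (Suc n)) (x n))"

definition common_future :: "('a \<Rightarrow> 'a \<Rightarrow> bool) \<Rightarrow> 'a set \<Rightarrow> 'a set" where
  "common_future rel S = chr_fut rel {y. \<forall>x\<in>S. rel x y}"

definition common_past :: "('a \<Rightarrow> 'a \<Rightarrow> bool) \<Rightarrow> 'a set \<Rightarrow> 'a set" where
  "common_past rel S = chr_past rel {y. \<forall>x\<in>S. rel y x}"

definition LI :: "(nat \<Rightarrow> 'a set) \<Rightarrow> 'a set" where
  "LI A = {p. \<exists>N. \<forall>n\<ge>N. p \<in> A n}"

definition LS :: "(nat \<Rightarrow> 'a set) \<Rightarrow> 'a set" where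
  "LS A = {p. \<forall>N. \<exists>n\<ge>N. p \<in> A n}"

definition hatL :: "('a \<Rightarrow> 'a \<Rightarrow> bool) \<Rightarrow> (nat \<Rightarrow> 'a) \<Rightarrow> 'a set" where
  "hatL rel \<sigma> = {x.
     chr_past rel {x} \<subseteq> LI (\<lambda>n. chr_past rel {\<sigma> n}) \<and>
     is_IP rel (chr_past rel {x}) \<and>
     chr_past rel {x} \<subseteq> LS (\<lambda>n. chr_past rel {\<sigma> n}) \<and>
     (\<forall>P. is_IP rel P \<and> P \<subseteq> LS (\<lambda>n. chr_past rel {\<sigma> n}) \<and> chr_past rel {x} \<subseteq> P
          \<longrightarrow> P = chr_past rel {x})}"

definition checkL :: "('a \<Rightarrow> 'a \<Rightarrow> bool) \<Rightarrow> (nat \<Rightarrow> 'a) \<Rightarrow> 'a set" where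
  "checkL rel \<sigma> = {x.
     chr_fut rel {x} \<subseteq> LI (\<lambda>n. chr_fut rel {\<sigma> n}) \<and>
     is_IF rel (chr_fut rel {x}) \<and>
     chr_fut rel {x} \<subseteq> LS (\<lambda>n. chr_fut rel {\<sigma> n}) \<and>
     (\<forall>F. is_IF rel F \<and> F \<subseteq> LS (\<lambda>n. chr_fut rel {\<sigma> n}) \<and> chr_fut rel {x} \<subseteq> F
          \<longrightarrow> F = chr_fut rel {x})}"

end

theory Submission
  imports Defs
begin

text \<open>
  For a future-directed chain \<open>\<eta>\<close> the pasts \<open>I\<^sup>-(\<eta> n)\<close> increase and the futures
  \<open>I\<^sup>+(\<eta> n)\<close> decrease with \<open>n\<close>.  Hence both the lower and the upper limit of the
  pasts equal their union \<open>I\<^sup>-(\<eta>)\<close>, and both limits of the futures equal their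
  intersection, the set of points lying in the future of every \<open>\<eta> n\<close>.  The set
  \<open>I\<^sup>-(\<eta>)\<close> is itself an IP, so the maximality clause in the definition of
  \<open>hatL \<eta>\<close> forces \<open>I\<^sup>-(x) = I\<^sup>-(\<eta>)\<close>; and a future set lies in the common future
  of \<open>\<eta>\<close> exactly when it lies in that intersection, which gives \<open>checkL \<eta>\<close>.
  Only transitivity of the relation (and past regularity for part (a)) is needed.

  The
  statements for past-directed chains follow by applying these to the converse
  relation, under which pasts and futures, IPs and IFs, and the two limit
  operators swap roles.
\<close>

lemma LI_subset_LS: "LI A \<subseteq> LS A"
proof
  fix p assume "p \<in> LI A"
  then obtain M where "\<forall>n\<ge>M. p \<in> A n" unfolding LI_def by blast
  then have "\<exists>n\<ge>N. p \<in> A n" for N by (intro exI[of _ "max M N"]) simp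
  then show "p \<in> LS A" unfolding LS_def by blast
qed

lemma LI_LS_mono:
  assumes "mono A"
  shows "LI A = (\<Union>n. A n)" and "LS A = (\<Union>n. A n)"
proof -
  have "(\<Union>n. A n) \<subseteq> LI A"
    unfolding LI_def using monoD[OF assms] by blast
  moreover have "LS A \<subseteq> (\<Union>n. A n)"
    unfolding LS_def by blast
  ultimately show "LI A = (\<Union>n. A n)" and "LS A = (\<Union>n. A n)"
    using LI_subset_LS[of A] by blast+
qed

lemma LI_LS_antimono:
  assumes "antimono A"
  shows "LI A = (\<Inter>n. A n)" and "LS A = (\<Inter>n. A n)"
proof -
  have "(\<Inter>n. A n) \<subseteq> LI A"
    unfolding LI_def by blast
  moreover have "LS A \<subseteq> (\<Inter>n. A n)"
  proof
    fix p assume "p \<in> LS A"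
    show "p \<in> (\<Inter>n. A n)"
    proof
      fix n
      obtain m where "m \<ge> n" "p \<in> A m" using \<open>p \<in> LS A\<close> unfolding LS_def by blast
      then show "p \<in> A n" using antimonoD[OF assms] by blast
    qed
  qed
  ultimately show "LI A = (\<Inter>n. A n)" and "LS A = (\<Inter>n. A n)"
    using LI_subset_LS[of A] by blast+
qed

lemma fut_chain_less:
  assumes "transp rel" and "fut_chain rel \<eta>" and "m < n"
  shows "rel (\<eta> m) (\<eta> n)"
  using assms(3)
proof (induction rule: less_Suc_induct)
  case (1 i) then show ?case using assms(2) by (simp add: fut_chain_def)
next
  case (2 i j k) then show ?case using assms(1) by (blast dest: transpD)
qed

lemma fut_chain_pasts_mono:
  assumes "transp rel" and "fut_chain rel \<eta>"
  shows "mono (\<lambda>n. chr_past rel {\<eta> n})"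
proof (rule monoI)
  fix m n :: nat assume "m \<le> n"
  then show "chr_past rel {\<eta> m} \<subseteq> chr_past rel {\<eta> n}"
    using fut_chain_less[OF assms, of m n] transpD[OF assms(1)]
    unfolding chr_past_def by (cases "m = n") auto
qed

lemma fut_chain_futures_antimono:
  assumes "transp rel" and "fut_chain rel \<eta>"
  shows "antimono (\<lambda>n. chr_fut rel {\<eta> n})"
proof (rule antimonoI)
  fix m n :: nat assume "m \<le> n"
  then show "chr_fut rel {\<eta> n} \<subseteq> chr_fut rel {\<eta> m}"
    using fut_chain_less[OF assms, of m n] transpD[OF assms(1)]
    unfolding chr_fut_def by (cases "m = n") auto
qed

text \<open>
  A past set containing terms of the chain with arbitrarily large indices contains
  the whole past of the chain; this is the key to indecomposability of \<open>I\<^sup>-(\<eta>)\<close>.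
\<close>

lemma past_set_cofinal_in_chain:
  assumes "transp rel" and "fut_chain rel \<eta>"
    and "past_set rel C" and cofinal: "\<forall>N. \<exists>n\<ge>N. \<eta> n \<in> C"
  shows "chr_past rel (range \<eta>) \<subseteq> C"
proof
  fix p assume "p \<in> chr_past rel (range \<eta>)"
  then obtain m where "p \<in> chr_past rel {\<eta> m}" unfolding chr_past_def by blast
  moreover obtain n where "n \<ge> m" and "\<eta> n \<in> C" using cofinal by blast
  ultimately have "p \<in> chr_past rel {\<eta> n}"
    using fut_chain_pasts_mono[OF assms(1,2)] by (blast dest: monoD)
  then have "p \<in> chr_past rel C" using \<open>\<eta> n \<in> C\<close> unfolding chr_past_def by blast
  then show "p \<in> C" using \<open>past_set rel C\<close> unfolding past_set_def by blast
qed

lemma fut_chain_past_is_IP: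
  assumes "transp rel" and "fut_chain rel \<eta>"
  shows "is_IP rel (chr_past rel (range \<eta>))"
proof -
  define Q where "Q = chr_past rel (range \<eta>)"
  have terms_in_Q: "\<eta> n \<in> Q" for n
    using fut_chain_less[OF assms, of n "Suc n"] unfolding Q_def chr_past_def by blast
  have "past_set rel Q"
    using terms_in_Q transpD[OF assms(1)]
    unfolding past_set_def Q_def chr_past_def by blast
  moreover have "\<not> (\<exists>A B. past_set rel A \<and> past_set rel B \<and> A \<noteq> Q \<and> B \<noteq> Q \<and> Q = A \<union> B)"
  proof
    assume "\<exists>A B. past_set rel A \<and> past_set rel B \<and> A \<noteq> Q \<and> B \<noteq> Q \<and> Q = A \<union> B"
    then obtain A B where past: "past_set rel A" "past_set rel B"
      and proper: "A \<noteq> Q" "B \<noteq> Q" and union: "Q = A \<union> B" by blast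
    text \<open>By pigeonhole one of the two parts meets the chain cofinally.\<close>
    have "(\<forall>N. \<exists>n\<ge>N. \<eta> n \<in> A) \<or> (\<forall>N. \<exists>n\<ge>N. \<eta> n \<in> B)"
    proof (rule ccontr)
      assume "\<not> ?thesis"
      then obtain N1 N2 where "\<forall>n\<ge>N1. \<eta> n \<notin> A" and "\<forall>n\<ge>N2. \<eta> n \<notin> B" by blast
      then show False using terms_in_Q[of "max N1 N2"] union by auto
    qed
    then show False
      using past_set_cofinal_in_chain[OF assms past(1)]
        past_set_cofinal_in_chain[OF assms past(2)] proper union
      unfolding Q_def by blast
  qed
  ultimately show ?thesis
    using terms_in_Q unfolding is_IP_def Q_def by blast
qed

lemma future_set_in_common_future:
  assumes "transp rel" and "future_set rel F"
  shows "F \<subseteq> common_future rel S \<longleftrightarrow> F \<subseteq> {y. \<forall>x\<in>S. rel x y}"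
proof
  assume "F \<subseteq> common_future rel S"
  then show "F \<subseteq> {y. \<forall>x\<in>S. rel x y}"
    using transpD[OF assms(1)] unfolding common_future_def chr_fut_def by blast
next
  assume "F \<subseteq> {y. \<forall>x\<in>S. rel x y}"
  moreover have "F \<subseteq> chr_fut rel F"
    using assms(2) unfolding future_set_def by blast
  ultimately show "F \<subseteq> common_future rel S"
    unfolding common_future_def chr_fut_def by blast
qed

lemma fut_chain_hatL:
  assumes "transp rel" and "past_regular rel" and "fut_chain rel \<eta>"
  shows "x \<in> hatL rel \<eta> \<longleftrightarrow> chr_past rel {x} = chr_past rel (range \<eta>)"
proof -
  define Q where "Q = chr_past rel (range \<eta>)"
  have "(\<Union>n. chr_past rel {\<eta> n}) = Q"
    unfolding Q_def chr_past_def by blast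
  then have limits: "LI (\<lambda>n. chr_past rel {\<eta> n}) = Q" "LS (\<lambda>n. chr_past rel {\<eta> n}) = Q"
    using LI_LS_mono[OF fut_chain_pasts_mono[OF assms(1,3)]] by simp_all
  have "x \<in> hatL rel \<eta> \<longleftrightarrow> chr_past rel {x} \<subseteq> Q \<and> is_IP rel (chr_past rel {x}) \<and>
          (\<forall>P. is_IP rel P \<and> P \<subseteq> Q \<and> chr_past rel {x} \<subseteq> P \<longrightarrow> P = chr_past rel {x})"
    unfolding hatL_def limits by blast
  also have "\<dots> \<longleftrightarrow> chr_past rel {x} = Q"
    using fut_chain_past_is_IP[OF assms(1,3)] assms(2)
    unfolding Q_def past_regular_def by blast
  finally show ?thesis unfolding Q_def .
qed

lemma fut_chain_checkL:
  assumes "transp rel" and "fut_chain rel \<eta>"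
  shows "x \<in> checkL rel \<eta> \<longleftrightarrow>
           chr_fut rel {x} \<subseteq> common_future rel (range \<eta>) \<and>
           is_IF rel (chr_fut rel {x}) \<and>
           (\<forall>F. is_IF rel F \<and> F \<subseteq> common_future rel (range \<eta>) \<and> chr_fut rel {x} \<subseteq> F
                \<longrightarrow> F = chr_fut rel {x})"
proof -
  define M where "M = {y. \<forall>x\<in>range \<eta>. rel x y}"
  have "(\<Inter>n. chr_fut rel {\<eta> n}) = M"
    unfolding M_def chr_fut_def by blast
  then have limits: "LI (\<lambda>n. chr_fut rel {\<eta> n}) = M" "LS (\<lambda>n. chr_fut rel {\<eta> n}) = M"
    using LI_LS_antimono[OF fut_chain_futures_antimono[OF assms]] by simp_all
  have IF_in_M: "is_IF rel F \<Longrightarrow> F \<subseteq> common_future rel (range \<eta>) \<longleftrightarrow> F \<subseteq> M" for F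
    unfolding M_def by (rule future_set_in_common_future[OF assms(1)]) (simp add: is_IF_def)
  have "x \<in> checkL rel \<eta> \<longleftrightarrow> chr_fut rel {x} \<subseteq> M \<and> is_IF rel (chr_fut rel {x}) \<and>
          (\<forall>F. is_IF rel F \<and> F \<subseteq> M \<and> chr_fut rel {x} \<subseteq> F \<longrightarrow> F = chr_fut rel {x})"
    unfolding checkL_def limits by blast
  moreover have "(\<forall>F. is_IF rel F \<and> F \<subseteq> M \<and> chr_fut rel {x} \<subseteq> F \<longrightarrow> F = chr_fut rel {x}) \<longleftrightarrow>
      (\<forall>F. is_IF rel F \<and> F \<subseteq> common_future rel (range \<eta>) \<and> chr_fut rel {x} \<subseteq> F
           \<longrightarrow> F = chr_fut rel {x})"
    using IF_in_M by blast
  ultimately show ?thesis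
    using IF_in_M[of "chr_fut rel {x}"] by argo
qed

lemma converse_duality:
  "chr_past (conversep rel) = chr_fut rel"
  "chr_fut (conversep rel) = chr_past rel"
  "is_IP (conversep rel) = is_IF rel"
  "is_IF (conversep rel) = is_IP rel"
  "hatL (conversep rel) = checkL rel"
  "checkL (conversep rel) = hatL rel"
  "common_future (conversep rel) = common_past rel"
  "past_regular (conversep rel) = future_regular rel"
  "fut_chain (conversep rel) = past_chain rel"
proof -
  show past_fut: "chr_past (conversep rel) = chr_fut rel" "chr_fut (conversep rel) = chr_past rel"
    unfolding chr_past_def chr_fut_def by auto
  then have sets: "past_set (conversep rel) = future_set rel"
      "future_set (conversep rel) = past_set rel"
    unfolding past_set_def future_set_def by auto
  show IP_IF: "is_IP (conversep rel) = is_IF rel"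
    unfolding is_IP_def is_IF_def sets by simp
  show IF_IP: "is_IF (conversep rel) = is_IP rel"
    unfolding is_IP_def is_IF_def sets by simp
  show "hatL (conversep rel) = checkL rel" "checkL (conversep rel) = hatL rel"
    unfolding hatL_def checkL_def past_fut IP_IF IF_IP by simp_all
  show "common_future (conversep rel) = common_past rel"
    unfolding common_future_def common_past_def past_fut by simp
  show "past_regular (conversep rel) = future_regular rel"
    unfolding past_regular_def future_regular_def past_fut IP_IF ..
  show "fut_chain (conversep rel) = past_chain rel"
    unfolding fut_chain_def past_chain_def by simp
qed

theorem mainTheorem1:
  fixes rel :: "'a \<Rightarrow> 'a \<Rightarrow> bool"
  assumes "chronological rel" and "past_regular rel" and "future_regular rel"
  shows "(\<forall>\<eta>. fut_chain rel \<eta> \<longrightarrow> (\<forall>x.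
            (x \<in> hatL rel \<eta> \<longleftrightarrow> chr_past rel {x} = chr_past rel (range \<eta>)) \<and>
            (x \<in> checkL rel \<eta> \<longleftrightarrow>
               chr_fut rel {x} \<subseteq> common_future rel (range \<eta>) \<and>
               is_IF rel (chr_fut rel {x}) \<and>
               (\<forall>F. is_IF rel F \<and> F \<subseteq> common_future rel (range \<eta>) \<and> chr_fut rel {x} \<subseteq> F
                    \<longrightarrow> F = chr_fut rel {x})))) \<and>
         (\<forall>\<eta>. past_chain rel \<eta> \<longrightarrow> (\<forall>x.
            (x \<in> checkL rel \<eta> \<longleftrightarrow> chr_fut rel {x} = chr_fut rel (range \<eta>)) \<and>
            (x \<in> hatL rel \<eta> \<longleftrightarrow>
               chr_past rel {x} \<subseteq> common_past rel (range \<eta>) \<and>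
               is_IP rel (chr_past rel {x}) \<and>
               (\<forall>P. is_IP rel P \<and> P \<subseteq> common_past rel (range \<eta>) \<and> chr_past rel {x} \<subseteq> P
                    \<longrightarrow> P = chr_past rel {x}))))"
proof -
  have trans: "transp rel"
    using assms(1) unfolding chronological_def by (blast intro: transpI)
  then have trans_converse: "transp (conversep rel)" by simp
  have converse_past_regular: "past_regular (conversep rel)"
    using assms(3) by (simp add: converse_duality)
  show ?thesis
    using fut_chain_hatL[OF trans assms(2)] fut_chain_checkL[OF trans]
      fut_chain_hatL[OF trans_converse converse_past_regular]
      fut_chain_checkL[OF trans_converse]
    by (simp add: converse_duality)
qed

end
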